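(* Let $S$ be a virtual flat biquandle, let $C_n(S)$ be the free abelian group on $n$-tuples $(a_1,\dots,a_n)$ of elements of $S$ ($C_0(S)=0$), and define $\partial_n:C_n(S)\to C_{n-1}(S)$ by $\partial_n=0$ for $n\le1$ and, for $n\ge2$, $$\partial_n(a_1,\dots,a_n)=\sum_{i=1}^n(-1)^i\big((a_1\ast a_i,\dots,a_{i-1}\ast a_i,a_{i+1},\dots,a_n)-(a_1,\dots,a_{i-1},a_{i+1}\circ a_i,\dots,a_n\circ a_i)\big).$$ Then $\partial_{n-1}\circ\partial_n=0$ for all $n$.
   Context: A virtual flat biquandle is a set $S$ with two binary operations $a\ast b$, $a\circ b$; writing $S_b(a)=a\ast b$, $T_b(a)=a\circ b$, for all $a,b\in S$: (1) $S_aS_b=S_bS_a$, $T_aT_b=T_bT_a$, $S_aT_b=T_bS_a$; (2) $S_a=S_{T_b(a)}=S_{S_b(a)}$, $T_a=T_{S_b(a)}=T_{T_b(a)}$; (3) $T_aS_a=S_aT_a=\mathrm{id}$. *)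

theory Defs
  imports "HOL-Library.Poly_Mapping"
begin

text \<open>Virtual flat biquandle on the whole type 'a, with a * b = star a b and
  a \<circ> b = circ a b; S_b(a) = star a b, T_b(a) = circ a b.\<close>
definition virtual_flat_biquandle :: "('a \<Rightarrow> 'a \<Rightarrow> 'a) \<Rightarrow> ('a \<Rightarrow> 'a \<Rightarrow> 'a) \<Rightarrow> bool" where
  "virtual_flat_biquandle star circ \<longleftrightarrow>
     (\<forall>a b x. star (star x b) a = star (star x a) b) \<and>
     (\<forall>a b x. circ (circ x b) a = circ (circ x a) b) \<and>
     (\<forall>a b x. star (circ x b) a = circ (star x a) b) \<and>
     (\<forall>a b x. star x a = star x (circ a b) \<and> star x a = star x (star a b)) \<and>
     (\<forall>a b x. circ x a = circ x (star a b) \<and> circ x a = circ x (circ a b)) \<and>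
     (\<forall>a x. circ (star x a) a = x \<and> star (circ x a) a = x)"

text \<open>Chains: C_n(S) is the free abelian group on n-tuples, i.e. elements of
  finitely supported int-valued functions on lists, on lists of length n (C_0 = 0: supported nowhere).\<close>
definition chain :: "nat \<Rightarrow> ('a list \<Rightarrow>\<^sub>0 int) \<Rightarrow> bool" where
  "chain n c \<longleftrightarrow> (n = 0 \<longrightarrow> c = 0) \<and> (\<forall>xs \<in> Poly_Mapping.keys c. length xs = n)"

text \<open>Boundary on a generator (a_1,...,a_n); a_i = xs ! (i-1).\<close>
definition bd_gen :: "('a \<Rightarrow> 'a \<Rightarrow> 'a) \<Rightarrow> ('a \<Rightarrow> 'a \<Rightarrow> 'a) \<Rightarrow> nat \<Rightarrow> 'a list \<Rightarrow> ('a list \<Rightarrow>\<^sub>0 int)" where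
  "bd_gen star circ n xs =
     (if n \<le> 1 then 0 else
      (\<Sum>i = 1..n. frag_cmul ((-1) ^ i)
         (frag_of (map (\<lambda>a. star a (xs ! (i-1))) (take (i-1) xs) @ drop i xs)
          - frag_of (take (i-1) xs @ map (\<lambda>a. circ a (xs ! (i-1))) (drop i xs)))))"

definition bd :: "('a \<Rightarrow> 'a \<Rightarrow> 'a) \<Rightarrow> ('a \<Rightarrow> 'a \<Rightarrow> 'a) \<Rightarrow> nat \<Rightarrow> ('a list \<Rightarrow>\<^sub>0 int) \<Rightarrow> ('a list \<Rightarrow>\<^sub>0 int)" where
  "bd star circ n c = frag_extend (bd_gen star circ n) c"

end

theory Submission
  imports Defs
begin

text \<open>The boundary is an alternating sum of face maps: the i-th left face deletes
  a_i and acts by \<open>\<ast> a_i\<close> on the entries before it, the i-th right face deletes a_i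
  and acts by \<open>\<circ> a_i\<close> on the entries after it. The biquandle axioms say exactly that
  these faces satisfy the simplicial identity d_i d_(j+1) = d_j d_i for i \<le> j (for any
  choice of sides). Since the sign of a face changes when its position moves by one,
  the two sides of each such identity carry opposite signs in the double boundary,
  whose terms therefore cancel in pairs.\<close>

lemma virtual_flat_biquandleD:
  assumes "virtual_flat_biquandle star circ"
  shows star_star_commute: "star (star x b) a = star (star x a) b"
    and circ_circ_commute: "circ (circ x b) a = circ (circ x a) b"
    and star_circ_commute: "star (circ x b) a = circ (star x a) b"
    and star_right_circ: "star x (circ a b) = star x a"
    and star_right_star: "star x (star a b) = star x a"
    and circ_right_star: "circ x (star a b) = circ x a"
    and circ_right_circ: "circ x (circ a b) = circ x a"
  using assms unfolding virtual_flat_biquandle_def by metis+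

text \<open>Faces are indexed from 0; \<open>right\<close> selects the \<open>\<circ>\<close>-face.\<close>

definition face :: "('a \<Rightarrow> 'a \<Rightarrow> 'a) \<Rightarrow> ('a \<Rightarrow> 'a \<Rightarrow> 'a) \<Rightarrow> bool \<Rightarrow> nat \<Rightarrow> 'a list \<Rightarrow> 'a list" where
  "face star circ right i xs =
     (if right then take i xs @ map (\<lambda>a. circ a (xs ! i)) (drop (Suc i) xs)
      else map (\<lambda>a. star a (xs ! i)) (take i xs) @ drop (Suc i) xs)"

lemma length_face: "i < length xs \<Longrightarrow> length (face star circ right i xs) = length xs - 1"
  by (auto simp: face_def)

lemma nth_face:
  assumes "i < length xs" "k < length xs - 1"
  shows "face star circ right i xs ! k =
    (if k < i then (if right then xs ! k else star (xs ! k) (xs ! i))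
     else (if right then circ (xs ! Suc k) (xs ! i) else xs ! Suc k))"
  using assms by (auto simp: face_def nth_append min_def)

lemma face_face:
  assumes "virtual_flat_biquandle star circ" and "i \<le> j" "Suc j < length xs"
  shows "face star circ r i (face star circ r' (Suc j) xs) = face star circ r' j (face star circ r i xs)"
proof (rule nth_equalityI)
  fix k assume "k < length (face star circ r i (face star circ r' (Suc j) xs))"
  then show "face star circ r i (face star circ r' (Suc j) xs) ! k = face star circ r' j (face star circ r i xs) ! k"
    using assms by (auto simp: length_face nth_face virtual_flat_biquandleD[OF assms(1)])
qed (use assms in \<open>simp add: length_face\<close>)

lemma sum_pairs_cancel:
  fixes T :: "nat \<times> nat \<Rightarrow> 'a::ab_group_add"
  assumes anti: "\<And>i j. i \<le> j \<Longrightarrow> j < m \<Longrightarrow> T (i, Suc j) = - T (j, i)"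
  shows "(\<Sum>p\<in>{..<m}\<times>{..<Suc m}. T p) = 0"
proof -
  define below where "below = {(i, j). j \<le> i \<and> i < m}"
  define above where "above = {(i, j). i < j \<and> j < Suc m}"
  have split: "{..<m}\<times>{..<Suc m} = below \<union> above" "below \<inter> above = {}"
    unfolding below_def above_def by auto
  have fin: "finite below" "finite above"
    using split by (metis finite_Un finite_SigmaI finite_lessThan)+
  have "bij_betw (\<lambda>(j, i). (i, Suc j)) below above"
    by (rule bij_betw_byWitness[where f' = "\<lambda>(i, j). (j - 1, i)"])
       (auto simp: below_def above_def)
  then have "sum T above = (\<Sum>(j, i)\<in>below. T (i, Suc j))"
    by (simp add: sum.reindex_bij_betw[symmetric] case_prod_unfold)
  also have "\<dots> = - sum T below"
    by (simp add: below_def anti sum_negf case_prod_unfold)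
  finally show ?thesis
    using split fin by (simp add: sum.union_disjoint)
qed

definition face_sign :: "nat \<Rightarrow> bool \<Rightarrow> int" where
  "face_sign i right = (if right then (-1) ^ i else - ((-1) ^ i))"

lemma face_sign_Suc: "face_sign (Suc i) right = - face_sign i right"
  by (simp add: face_sign_def)

lemma frag_cmul_diff_distrib2: "frag_cmul c (a - b) = frag_cmul c a - frag_cmul c b"
  by (rule poly_mapping_eqI) (simp add: lookup_minus right_diff_distrib)

lemma bd_gen_eq_sum_faces:
  "2 \<le> n \<Longrightarrow> bd_gen star circ n xs =
     (\<Sum>i<n. \<Sum>r\<in>UNIV. frag_cmul (face_sign i r) (frag_of (face star circ r i xs)))"
  unfolding bd_gen_def
  by (simp add: sum.atLeast1_atMost_eq UNIV_bool face_sign_def face_def frag_cmul_diff_distrib2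
      minus_frag_cmul[symmetric] del: minus_frag_cmul)

lemma bd_gen_bd_gen:
  assumes biq: "virtual_flat_biquandle star circ" and len: "length xs = n" and "3 \<le> n"
  shows "frag_extend (bd_gen star circ (n - 1)) (bd_gen star circ n xs) = 0"
proof -
  let ?F = "face star circ"
  define T where "T = (\<lambda>(i, j). \<Sum>r\<in>UNIV. \<Sum>r'\<in>UNIV.
    frag_cmul (face_sign j r' * face_sign i r) (frag_of (?F r i (?F r' j xs))))"
  have "frag_extend (bd_gen star circ (n - 1)) (bd_gen star circ n xs)
      = (\<Sum>j<n. \<Sum>r'\<in>UNIV. frag_cmul (face_sign j r') (bd_gen star circ (n - 1) (?F r' j xs)))"
    using \<open>3 \<le> n\<close> by (simp add: bd_gen_eq_sum_faces frag_extend_sum frag_extend_cmul o_def)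
  also have "\<dots> = (\<Sum>j<n. \<Sum>i<n - 1. T (i, j))"
    using \<open>3 \<le> n\<close> unfolding T_def
    by (simp add: bd_gen_eq_sum_faces frag_cmul_sum frag_cmul_distrib2 UNIV_bool sum.distrib add_ac)
  also have "\<dots> = (\<Sum>p\<in>{..<n - 1}\<times>{..<Suc (n - 1)}. T p)"
    using \<open>3 \<le> n\<close> by (subst sum.swap) (simp add: sum.cartesian_product)
  also have "\<dots> = 0"
  proof (rule sum_pairs_cancel)
    fix i j assume "i \<le> j" "j < n - 1"
    then have "?F r i (?F r' (Suc j) xs) = ?F r' j (?F r i xs)" for r r'
      using face_face[OF biq] len by simp
    then show "T (i, Suc j) = - T (j, i)"
      unfolding T_def by (simp add: face_sign_Suc UNIV_bool algebra_simps)
  qed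
  finally show ?thesis .
qed

theorem lemma5p1:
  fixes star circ :: "'a \<Rightarrow> 'a \<Rightarrow> 'a" and n :: nat and c :: "'a list \<Rightarrow>\<^sub>0 int"
  assumes "virtual_flat_biquandle star circ"
    and "chain n c"
  shows "bd star circ (n - 1) (bd star circ n c) = 0"
proof (cases "3 \<le> n")
  case False
  then have "bd_gen star circ (n - 1) = (\<lambda>_. 0)"
    by (simp add: bd_gen_def fun_eq_iff)
  then show ?thesis
    by (simp add: bd_def frag_extend_def)
next
  case True
  have "Poly_Mapping.keys c \<subseteq> {xs. length xs = n}"
    using assms(2) unfolding chain_def by auto
  then show ?thesis
  proof (induction c rule: frag_induction)
    case (one xs)
    then show ?case
      using bd_gen_bd_gen[OF assms(1) _ True] by (simp add: bd_def)
  qed (simp_all add: bd_def frag_extend_diff)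
qed

end
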